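(* For a finite set of types $T$ and a positive integer $n$, $\gamma(\mathcal{G}_T^n)\ge\mathrm{GPoA}(\mathcal{G}_T^n)$.
   Context: Fix a positive integer $n$ and a finite set of resource types $T=\{(c_1,f_1),\dots,(c_m,f_m)\}$, $c_t,f_t:\{1,\dots,n\}\to\mathbb{R}$, extended by $c_t(0)=f_t(0)=f_t(n+1)=0$. The class $\mathcal{G}_T^n$ consists of all local resource allocation games: agent set $N=\{1,\dots,n\}$; finite resource set $\mathcal{R}$; for each $r$ a value $v_r\ge0$ and a type $(c,f)\in T$, with $c_r=v_rc$, $f_r=v_rf$; action sets $\mathcal{A}_i\subseteq2^{\mathcal{R}}$, $\mathcal{A}=\prod_i\mathcal{A}_i$; $|a|_r$ = number of agents $i$ with $r\in a_i$; $C(a)=\sum_rc_r(|a|_r)$, $J_i(a)=\sum_{r\in a_i}f_r(|a|_r)$. $\mathrm{GPoA}(\mathcal{G}_T^n)=\inf\{\lambda/(1-\mu):\lambda>0,\mu<1\}$ over $(\lambda,\mu)$ such that for every $G\in\mathcal{G}_T^n$ and all $a,a'\in\mathcal{A}$: $\sum_iJ_i(a'_i,a_{-i})-\sum_iJ_i(a)+C(a)\le\lambda C(a')+\mu C(a)$. With $\mathbb{N}=\{0,1,\dots\}$, $\mathcal{I}=\{(x,y,z)\in\mathbb{N}^3:1\le x+y-z\le n,\ z\le\min\{x,y\}\}$ and $\mathcal{I}_{\mathcal{R}}=\{(x,y,z)\in\mathcal{I}:x+y-z=n\text{ or }(x-z)(y-z)z=0\}$. $\mathcal{S}(\mathcal{G}_T^n)$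 is the set of $(\lambda,\mu)$ with $\lambda>0$, $\mu<1$ such that for all $(c,f)\in T$ and all $(x,y,z)\in\mathcal{I}_{\mathcal{R}}$: $(z-x)f(x)+(y-z)f(x+1)+c(x)\le\lambda c(y)+\mu c(x)$. Define $\gamma(\mathcal{G}_T^n)=\inf\{\lambda/(1-\mu):(\lambda,\mu)\in\mathcal{S}(\mathcal{G}_T^n)\}$. *)

theory Defs
  imports Complex_Main "HOL-Library.Extended_Real"
begin

text \<open>A resource type is a pair (c, f) of functions; only their values on 1..n matter,
  and they are extended by c(0) = f(0) = f(n+1) = 0 (values beyond n are never used
  except f(n+1)).\<close>

type_synonym rtype = "(nat \<Rightarrow> real) \<times> (nat \<Rightarrow> real)"

definition ext_fun :: "nat \<Rightarrow> (nat \<Rightarrow> real) \<Rightarrow> nat \<Rightarrow> real" where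
  "ext_fun n g k = (if 1 \<le> k \<and> k \<le> n then g k else 0)"

definition lra_game :: "nat \<Rightarrow> rtype set \<Rightarrow> nat set \<Rightarrow> (nat \<Rightarrow> real) \<Rightarrow> (nat \<Rightarrow> rtype)
    \<Rightarrow> (nat \<Rightarrow> nat set set) \<Rightarrow> bool" where
  "lra_game n T R v ty A \<longleftrightarrow> finite R \<and> (\<forall>r\<in>R. v r \<ge> 0 \<and> ty r \<in> T)
     \<and> (\<forall>i\<in>{1..n}. A i \<subseteq> Pow R)"

definition is_profile :: "nat \<Rightarrow> (nat \<Rightarrow> nat set set) \<Rightarrow> (nat \<Rightarrow> nat set) \<Rightarrow> bool" where
  "is_profile n A a \<longleftrightarrow> (\<forall>i\<in>{1..n}. a i \<in> A i)"

definition load :: "nat \<Rightarrow> (nat \<Rightarrow> nat set) \<Rightarrow> nat \<Rightarrow> nat" where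
  "load n a r = card {i\<in>{1..n}. r \<in> a i}"

definition welfare :: "nat \<Rightarrow> nat set \<Rightarrow> (nat \<Rightarrow> real) \<Rightarrow> (nat \<Rightarrow> rtype) \<Rightarrow> (nat \<Rightarrow> nat set) \<Rightarrow> real" where
  "welfare n R v ty a = (\<Sum>r\<in>R. v r * ext_fun n (fst (ty r)) (load n a r))"

definition utility :: "nat \<Rightarrow> (nat \<Rightarrow> real) \<Rightarrow> (nat \<Rightarrow> rtype) \<Rightarrow> (nat \<Rightarrow> nat set) \<Rightarrow> nat \<Rightarrow> real" where
  "utility n v ty a i = (\<Sum>r\<in>a i. v r * ext_fun n (snd (ty r)) (load n a r))"

definition game_smooth :: "nat \<Rightarrow> rtype set \<Rightarrow> real \<Rightarrow> real \<Rightarrow> bool" where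
  "game_smooth n T lam mu \<longleftrightarrow>
     (\<forall>R v ty A a a'. lra_game n T R v ty A \<and> is_profile n A a \<and> is_profile n A a' \<longrightarrow>
        (\<Sum>i\<in>{1..n}. utility n v ty (a(i := a' i)) i) - (\<Sum>i\<in>{1..n}. utility n v ty a i)
          + welfare n R v ty a
        \<le> lam * welfare n R v ty a' + mu * welfare n R v ty a)"

text \<open>Infimum taken in the extended reals, so that inf of the empty set is +\<infinity>.\<close>

definition GPoA :: "nat \<Rightarrow> rtype set \<Rightarrow> ereal" where
  "GPoA n T = Inf {ereal (lam / (1 - mu)) | lam mu. lam > 0 \<and> mu < 1 \<and> game_smooth n T lam mu}"

definition I_set :: "nat \<Rightarrow> (nat \<times> nat \<times> nat) set" where
  "I_set n = {(x, y, z). 1 \<le> x + y - z \<and> x + y - z \<le> n \<and> z \<le> min x y}"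

definition I_R :: "nat \<Rightarrow> (nat \<times> nat \<times> nat) set" where
  "I_R n = {(x, y, z) \<in> I_set n. x + y - z = n \<or> (x - z) * (y - z) * z = 0}"

definition S_set :: "nat \<Rightarrow> rtype set \<Rightarrow> (real \<times> real) set" where
  "S_set n T = {(lam, mu). lam > 0 \<and> mu < 1 \<and>
     (\<forall>(c, f)\<in>T. \<forall>(x, y, z)\<in>I_R n.
        (real z - real x) * ext_fun n f x + (real y - real z) * ext_fun n f (x + 1)
          + ext_fun n c x
        \<le> lam * ext_fun n c y + mu * ext_fun n c x)}"

definition gamma :: "nat \<Rightarrow> rtype set \<Rightarrow> ereal" where
  "gamma n T = Inf {ereal (lam / (1 - mu)) | lam mu. (lam, mu) \<in> S_set n T}"

end

theory Submission
  imports Defs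
begin

text \<open>The smoothness inequality of a game is a sum over resources, and the contribution of a
  resource r only depends on the numbers x = |a|_r, y = |a'|_r and z of agents using r in both
  profiles (a unilateral deviation onto r sees load x if the agent was already there and x + 1
  otherwise), through an inequality that is exactly the defining inequality of S_set at (x, y, z).
  That inequality is required only on I_R, but for fixed x and y its left side is affine in z,
  so it holds on all of I_set as soon as it holds at the two extreme values of z, which lie in
  I_R. Hence every pair in S_set certifies smoothness, and gamma, an infimum over a smaller set,
  dominates GPoA.\<close>

lemma S_set_ineq:
  assumes S: "(lam, mu) \<in> S_set n T" and cf: "(c, f) \<in> T"
    and z: "z \<le> x" "z \<le> y" and n: "x + y - z \<le> n"
  shows "(real z - real x) * ext_fun n f x + (real y - real z) * ext_fun n f (x + 1)
           + ext_fun n c x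
         \<le> lam * ext_fun n c y + mu * ext_fun n c x"
proof (cases "x + y - z = 0")
  case True
  then have "x = 0" "y = 0" "z = 0" using z by auto
  then show ?thesis by (simp add: ext_fun_def)
next
  case False
  define L where "L z' = (real z' - real x) * ext_fun n f x + (real y - real z') * ext_fun n f (x + 1)"
    for z'
  have on_I_R: "L z' + ext_fun n c x \<le> lam * ext_fun n c y + mu * ext_fun n c x"
    if "(x, y, z') \<in> I_R n" for z'
    using S cf that unfolding S_set_def L_def by fastforce
  define z0 where "z0 = x + y - n"
  define z1 where "z1 = min x y"
  have "(x, y, z0) \<in> I_R n" "(x, y, z1) \<in> I_R n"
    using False z n unfolding I_R_def I_set_def z0_def z1_def by auto
  moreover have "z0 \<le> z" "z \<le> z1" using z n unfolding z0_def z1_def by auto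
  moreover have "L z \<le> L z0 \<or> L z \<le> L z1"
  proof -
    define d where "d = ext_fun n f x - ext_fun n f (x + 1)"
    have "L z = L z0 + (real z - real z0) * d" "L z = L z1 - (real z1 - real z) * d"
      unfolding L_def d_def by (simp_all add: algebra_simps)
    moreover have "d \<le> 0 \<Longrightarrow> (real z - real z0) * d \<le> 0" "d \<ge> 0 \<Longrightarrow> (real z1 - real z) * d \<ge> 0"
      using \<open>z0 \<le> z\<close> \<open>z \<le> z1\<close> by (simp_all add: mult_nonneg_nonpos)
    ultimately show ?thesis by linarith
  qed
  ultimately show ?thesis using on_I_R unfolding L_def by fastforce
qed

lemma sum_sum_swap_subsets:
  assumes "finite I" "finite R" "\<And>i. i \<in> I \<Longrightarrow> B i \<subseteq> R"
  shows "(\<Sum>i\<in>I. \<Sum>r\<in>B i. h i r) = (\<Sum>r\<in>R. \<Sum>i\<in>{i\<in>I. r \<in> B i}. (h i r :: 'c::comm_monoid_add))"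
proof -
  have "(\<Sum>i\<in>I. \<Sum>r\<in>B i. h i r) = (\<Sum>i\<in>I. \<Sum>r\<in>{r\<in>R. r \<in> B i}. h i r)"
  proof (rule sum.cong[OF refl])
    fix i assume "i \<in> I"
    then have "B i = {r\<in>R. r \<in> B i}" using assms(3) by auto
    then show "(\<Sum>r\<in>B i. h i r) = (\<Sum>r\<in>{r\<in>R. r \<in> B i}. h i r)" by simp
  qed
  also have "\<dots> = (\<Sum>r\<in>R. \<Sum>i\<in>{i\<in>I. r \<in> B i}. h i r)"
    by (rule sum.swap_restrict[OF assms(1,2)])
  finally show ?thesis .
qed

lemma load_fun_upd:
  assumes "i \<in> {1..n}" "r \<in> b"
  shows "load n (a(i := b)) r = (if r \<in> a i then load n a r else Suc (load n a r))"
proof (cases "r \<in> a i")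
  case True
  then have "{j\<in>{1..n}. r \<in> (a(i := b)) j} = {j\<in>{1..n}. r \<in> a j}" using assms by auto
  then show ?thesis using True unfolding load_def by simp
next
  case False
  then have "{j\<in>{1..n}. r \<in> (a(i := b)) j} = insert i {j\<in>{1..n}. r \<in> a j}"
    using assms by auto
  then show ?thesis using False unfolding load_def by simp
qed

definition stayers :: "nat \<Rightarrow> (nat \<Rightarrow> nat set) \<Rightarrow> (nat \<Rightarrow> nat set) \<Rightarrow> nat \<Rightarrow> nat set" where
  "stayers n a a' r = {i\<in>{1..n}. r \<in> a i \<and> r \<in> a' i}"

definition joiners :: "nat \<Rightarrow> (nat \<Rightarrow> nat set) \<Rightarrow> (nat \<Rightarrow> nat set) \<Rightarrow> nat \<Rightarrow> nat set" where
  "joiners n a a' r = {i\<in>{1..n}. r \<notin> a i \<and> r \<in> a' i}"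

lemma load_eq_card_stayers_joiners:
  "load n a' r = card (stayers n a a' r) + card (joiners n a a' r)"
proof -
  have "{i\<in>{1..n}. r \<in> a' i} = stayers n a a' r \<union> joiners n a a' r"
    "stayers n a a' r \<inter> joiners n a a' r = {}"
    unfolding stayers_def joiners_def by auto
  then show ?thesis unfolding load_def
    by (simp add: card_Un_disjoint stayers_def joiners_def)
qed

lemma card_stayers_le_load: "card (stayers n a a' r) \<le> load n a r"
  unfolding stayers_def load_def by (rule card_mono) auto

lemma load_add_card_joiners_le: "load n a r + card (joiners n a a' r) \<le> n"
proof -
  have "load n a r + card (joiners n a a' r) = card ({i\<in>{1..n}. r \<in> a i} \<union> joiners n a a' r)"
    unfolding load_def joiners_def by (subst card_Un_disjoint) auto
  also have "\<dots> \<le> card {1..n}"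
    unfolding joiners_def by (rule card_mono) auto
  finally show ?thesis by simp
qed

lemma sum_utility_eq:
  assumes "finite R" "\<forall>i\<in>{1..n}. a i \<subseteq> R"
  shows "(\<Sum>i\<in>{1..n}. utility n v ty a i)
    = (\<Sum>r\<in>R. v r * (real (load n a r) * ext_fun n (snd (ty r)) (load n a r)))"
proof -
  have "(\<Sum>i\<in>{1..n}. utility n v ty a i)
      = (\<Sum>r\<in>R. \<Sum>i\<in>{i\<in>{1..n}. r \<in> a i}. v r * ext_fun n (snd (ty r)) (load n a r))"
    unfolding utility_def using assms by (intro sum_sum_swap_subsets) auto
  then show ?thesis by (simp add: load_def mult.left_commute)
qed

lemma sum_deviation_utility_eq:
  assumes "finite R" "\<forall>i\<in>{1..n}. a' i \<subseteq> R"
  shows "(\<Sum>i\<in>{1..n}. utility n v ty (a(i := a' i)) i)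
    = (\<Sum>r\<in>R. v r * (real (card (stayers n a a' r)) * ext_fun n (snd (ty r)) (load n a r)
        + real (card (joiners n a a' r)) * ext_fun n (snd (ty r)) (load n a r + 1)))"
proof -
  define h where "h i r = v r * ext_fun n (snd (ty r)) (load n (a(i := a' i)) r)" for i r
  have "(\<Sum>i\<in>{1..n}. utility n v ty (a(i := a' i)) i)
      = (\<Sum>r\<in>R. \<Sum>i\<in>{i\<in>{1..n}. r \<in> a' i}. h i r)"
    unfolding utility_def h_def fun_upd_same using assms by (intro sum_sum_swap_subsets) auto
  also have "\<dots> = (\<Sum>r\<in>R. (\<Sum>i\<in>stayers n a a' r. h i r) + (\<Sum>i\<in>joiners n a a' r. h i r))"
  proof (rule sum.cong[OF refl])
    fix r
    have "{i\<in>{1..n}. r \<in> a' i} = stayers n a a' r \<union> joiners n a a' r"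
      unfolding stayers_def joiners_def by auto
    then show "(\<Sum>i\<in>{i\<in>{1..n}. r \<in> a' i}. h i r)
        = (\<Sum>i\<in>stayers n a a' r. h i r) + (\<Sum>i\<in>joiners n a a' r. h i r)"
      by (simp add: sum.union_disjoint stayers_def joiners_def disjoint_iff)
  qed
  also have "\<dots> = (\<Sum>r\<in>R. v r * (real (card (stayers n a a' r)) * ext_fun n (snd (ty r)) (load n a r)
        + real (card (joiners n a a' r)) * ext_fun n (snd (ty r)) (load n a r + 1)))"
  proof (rule sum.cong[OF refl])
    fix r
    have "(\<Sum>i\<in>stayers n a a' r. h i r) = (\<Sum>i\<in>stayers n a a' r. v r * ext_fun n (snd (ty r)) (load n a r))"
      by (rule sum.cong[OF refl]) (simp add: h_def stayers_def load_fun_upd)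
    moreover have "(\<Sum>i\<in>joiners n a a' r. h i r) = (\<Sum>i\<in>joiners n a a' r. v r * ext_fun n (snd (ty r)) (load n a r + 1))"
      by (rule sum.cong[OF refl]) (simp add: h_def joiners_def load_fun_upd)
    ultimately show "(\<Sum>i\<in>stayers n a a' r. h i r) + (\<Sum>i\<in>joiners n a a' r. h i r)
        = v r * (real (card (stayers n a a' r)) * ext_fun n (snd (ty r)) (load n a r)
          + real (card (joiners n a a' r)) * ext_fun n (snd (ty r)) (load n a r + 1))"
      by (simp add: algebra_simps)
  qed
  finally show ?thesis .
qed

lemma S_set_resource_ineq:
  assumes S: "(lam, mu) \<in> S_set n T" and "ty r \<in> T" and "v r \<ge> 0"
  shows "v r * (real (card (stayers n a a' r)) * ext_fun n (snd (ty r)) (load n a r)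
        + real (card (joiners n a a' r)) * ext_fun n (snd (ty r)) (load n a r + 1))
      - v r * (real (load n a r) * ext_fun n (snd (ty r)) (load n a r))
      + v r * ext_fun n (fst (ty r)) (load n a r)
    \<le> lam * (v r * ext_fun n (fst (ty r)) (load n a' r))
      + mu * (v r * ext_fun n (fst (ty r)) (load n a r))"
proof -
  define x where "x = load n a r"
  define y where "y = load n a' r"
  define z where "z = card (stayers n a a' r)"
  have y: "y = z + card (joiners n a a' r)"
    unfolding y_def z_def by (rule load_eq_card_stayers_joiners)
  have "z \<le> x" "z \<le> y" "x + y - z \<le> n"
    using card_stayers_le_load load_add_card_joiners_le
    unfolding x_def y z_def by (auto simp: add.commute)
  moreover have "(fst (ty r), snd (ty r)) \<in> T" using assms(2) by simp
  ultimately have "(real z - real x) * ext_fun n (snd (ty r)) x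
      + (real y - real z) * ext_fun n (snd (ty r)) (x + 1) + ext_fun n (fst (ty r)) x
    \<le> lam * ext_fun n (fst (ty r)) y + mu * ext_fun n (fst (ty r)) x"
    using S_set_ineq[OF S] by blast
  then have "v r * ((real z - real x) * ext_fun n (snd (ty r)) x
      + (real y - real z) * ext_fun n (snd (ty r)) (x + 1) + ext_fun n (fst (ty r)) x)
    \<le> v r * (lam * ext_fun n (fst (ty r)) y + mu * ext_fun n (fst (ty r)) x)"
    using assms(3) by (rule mult_left_mono)
  then show ?thesis unfolding x_def [symmetric] y_def [symmetric] z_def [symmetric] y
    by (simp add: algebra_simps)
qed

lemma S_set_game_smooth:
  assumes S: "(lam, mu) \<in> S_set n T"
  shows "game_smooth n T lam mu"
  unfolding game_smooth_def
proof (intro allI impI, elim conjE)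
  fix R v ty A a a'
  assume "lra_game n T R v ty A" "is_profile n A a" "is_profile n A a'"
  then have R: "finite R" "\<forall>r\<in>R. v r \<ge> 0 \<and> ty r \<in> T"
    and a: "\<forall>i\<in>{1..n}. a i \<subseteq> R" "\<forall>i\<in>{1..n}. a' i \<subseteq> R"
    unfolding lra_game_def is_profile_def by blast+
  show "(\<Sum>i\<in>{1..n}. utility n v ty (a(i := a' i)) i) - (\<Sum>i\<in>{1..n}. utility n v ty a i)
      + welfare n R v ty a
    \<le> lam * welfare n R v ty a' + mu * welfare n R v ty a"
    unfolding sum_deviation_utility_eq[OF R(1) a(2)] sum_utility_eq[OF R(1) a(1)] welfare_def
      sum_distrib_left sum_subtractf [symmetric] sum.distrib [symmetric]
    using R(2) by (intro sum_mono S_set_resource_ineq[OF S]) auto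
qed

theorem lemma2:
  fixes n :: nat and T :: "rtype set"
  assumes "finite T" and "n \<ge> 1"
  shows "gamma n T \<ge> GPoA n T"
proof -
  have "{ereal (lam / (1 - mu)) | lam mu. (lam, mu) \<in> S_set n T}
     \<subseteq> {ereal (lam / (1 - mu)) | lam mu. lam > 0 \<and> mu < 1 \<and> game_smooth n T lam mu}"
    using S_set_game_smooth unfolding S_set_def by blast
  then show ?thesis unfolding gamma_def GPoA_def by (rule Inf_superset_mono)
qed

end
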